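(* Let $\Omega=\mathcal{C}_0([0,\infty),\mathbb{R}^d)$ with the topology of uniform convergence on compacts, and let $\mathcal{E}$ be a $G$-expectation, extended to $\mathcal{C}_b(\Omega)$ by $\mathcal{E}(f)=\sup_{P\in\mathcal{P}}E_P(f)$, where $\mathcal{P}$ is a weakly relatively compact set of Borel probability measures representing $\mathcal{E}$. There is a countable weakly relatively compact set $\{Q_n,\ n\in\mathbb{N}\}\subset\mathcal{P}$ such that $\mathcal{E}(X)=\sup_{n\in\mathbb{N}}E_{Q_n}(X)$ for all $X\in\mathcal{C}_b(\Omega)$. With $P=\sum_{n\in\mathbb{N}^*}Q_n/2^{n+1}$, for every $f\ge0$ in $\mathcal{C}_b(\Omega)$, $\mathcal{E}(f)=0$ iff $f=0$ $P$-a.s. For every $X\in\mathcal{C}_b(\Omega)$ there is a probability measure $Q_X$ in the weak closure of $\{Q_n\}$ with $\mathcal{E}(X)=E_{Q_X}(X)$.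
   Context: A $G$-expectation in the sense of Peng is a sublinear expectation on a vector lattice of functions in $\mathcal{C}_b(\Omega)$ containing $1$; it is known (from earlier work) that such $\mathcal{E}$ admits a representation $\mathcal{E}(f)=\sup_{P\in\mathcal{P}}E_P(f)$ by a weakly relatively compact set $\mathcal{P}$ of Borel probability measures on $\Omega$, which is used to extend $\mathcal{E}$ to $\mathcal{C}_b(\Omega)$. Weak topology: the coarsest making $\mu\mapsto\int f\,d\mu$ continuous for all $f\in\mathcal{C}_b(\Omega)$. *)

theory Defs
  imports "HOL-Analysis.Analysis" "HOL-Probability.Probability"
begin

text \<open>A path on [0,oo) is represented by a function on the reals that is
continuous on [0,oo), starts at 0, and is (by convention) 0 on the negative
reals, so that paths correspond one-to-one to such functions.\<close>

definition Omega :: "(real \<Rightarrow> real^'d::finite) set" where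
  "Omega = {w. continuous_on {0..} w \<and> w 0 = 0 \<and> (\<forall>t<0. w t = 0)}"

definition ucc_open :: "(real \<Rightarrow> real^'d::finite) set \<Rightarrow> bool" where
  "ucc_open U \<longleftrightarrow> U \<subseteq> Omega \<and>
     (\<forall>w\<in>U. \<exists>T>0. \<exists>e>0. \<forall>w'\<in>Omega. (\<forall>t\<in>{0..T}. dist (w' t) (w t) < e) \<longrightarrow> w' \<in> U)"

lemma istopology_ucc_open: "istopology ucc_open"
  unfolding istopology_def
proof (intro conjI allI impI)
  fix S T :: "(real \<Rightarrow> real^'d) set"
  assume S: "ucc_open S" and T: "ucc_open T"
  show "ucc_open (S \<inter> T)"
    unfolding ucc_open_def
  proof (intro conjI ballI)
    show "S \<inter> T \<subseteq> Omega" using S unfolding ucc_open_def by blast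
  next
    fix w assume w: "w \<in> S \<inter> T"
    obtain T1 e1 where 1: "T1 > 0" "e1 > 0"
      "\<forall>w'\<in>Omega. (\<forall>t\<in>{0..T1}. dist (w' t) (w t) < e1) \<longrightarrow> w' \<in> S"
      using S w unfolding ucc_open_def by blast
    obtain T2 e2 where 2: "T2 > 0" "e2 > 0"
      "\<forall>w'\<in>Omega. (\<forall>t\<in>{0..T2}. dist (w' t) (w t) < e2) \<longrightarrow> w' \<in> T"
      using T w unfolding ucc_open_def by blast
    have key: "\<forall>w'\<in>Omega. (\<forall>t\<in>{0..max T1 T2}. dist (w' t) (w t) < min e1 e2) \<longrightarrow> w' \<in> S \<inter> T"
    proof (intro ballI impI)
      fix w' assume w': "w' \<in> Omega" and d: "\<forall>t\<in>{0..max T1 T2}. dist (w' t) (w t) < min e1 e2"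
      have a: "\<forall>t\<in>{0..T1}. dist (w' t) (w t) < e1"
      proof
        fix t assume "t \<in> {0..T1}"
        then have "t \<in> {0..max T1 T2}" by auto
        then have "dist (w' t) (w t) < min e1 e2" using d by blast
        then show "dist (w' t) (w t) < e1" by linarith
      qed
      have b: "\<forall>t\<in>{0..T2}. dist (w' t) (w t) < e2"
      proof
        fix t assume "t \<in> {0..T2}"
        then have "t \<in> {0..max T1 T2}" by auto
        then have "dist (w' t) (w t) < min e1 e2" using d by blast
        then show "dist (w' t) (w t) < e2" by linarith
      qed
      have "w' \<in> S" using 1(3) w' a by simp
      moreover have "w' \<in> T" using 2(3) w' b by simp
      ultimately show "w' \<in> S \<inter> T" by (rule IntI)
    qed
    have pos: "max T1 T2 > 0" "min e1 e2 > 0" using 1 2 by auto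
    show "\<exists>T0>0. \<exists>e>0. \<forall>w'\<in>Omega. (\<forall>t\<in>{0..T0}. dist (w' t) (w t) < e) \<longrightarrow> w' \<in> S \<inter> T"
      by (rule exI[of _ "max T1 T2"], rule conjI[OF pos(1)], rule exI[of _ "min e1 e2"], rule conjI[OF pos(2)], rule key)
  qed
next
  fix K :: "(real \<Rightarrow> real^'d) set set"
  assume "\<forall>U\<in>K. ucc_open U"
  then have H: "\<And>U. U \<in> K \<Longrightarrow> ucc_open U" by blast
  show "ucc_open (\<Union>K)"
    unfolding ucc_open_def
  proof (intro conjI ballI)
    show "\<Union>K \<subseteq> Omega" using H unfolding ucc_open_def by blast
  next
    fix w assume "w \<in> \<Union>K"
    then obtain U where U: "U \<in> K" "w \<in> U" by blast
    then obtain T0 e where Te: "T0 > 0" "e > 0"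
      "\<forall>w'\<in>Omega. (\<forall>t\<in>{0..T0}. dist (w' t) (w t) < e) \<longrightarrow> w' \<in> U"
      using H[OF U(1)] unfolding ucc_open_def by blast
    have "\<forall>w'\<in>Omega. (\<forall>t\<in>{0..T0}. dist (w' t) (w t) < e) \<longrightarrow> w' \<in> \<Union>K"
      using Te(3) U(1) by blast
    then show "\<exists>T0>0. \<exists>e>0. \<forall>w'\<in>Omega. (\<forall>t\<in>{0..T0}. dist (w' t) (w t) < e) \<longrightarrow> w' \<in> \<Union>K"
      using Te(1,2) by blast
  qed
qed

definition Omega_top :: "(real \<Rightarrow> real^'d::finite) topology" where
  "Omega_top = topology ucc_open"

definition borel_of :: "'a topology \<Rightarrow> 'a measure" where
  "borel_of X = sigma (topspace X) {U. openin X U}"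

definition Cb :: "'a topology \<Rightarrow> ('a \<Rightarrow> real) set" where
  "Cb X = {f. continuous_map X euclideanreal f \<and> (\<exists>B. \<forall>x\<in>topspace X. \<bar>f x\<bar> \<le> B)}"

definition borel_probs :: "'a topology \<Rightarrow> 'a measure set" where
  "borel_probs X = {P. prob_space P \<and> sets P = sets (borel_of X)}"

definition weak_topology :: "'a topology \<Rightarrow> 'a measure topology" where
  "weak_topology X = topology_generated_by
     {{\<mu> \<in> borel_probs X. integral\<^sup>L \<mu> f \<in> U} | f U. f \<in> Cb X \<and> open U}"

definition weakly_rel_compact :: "'a topology \<Rightarrow> 'a measure set \<Rightarrow> bool" where
  "weakly_rel_compact X A \<longleftrightarrow> A \<subseteq> borel_probs X \<and>
     compactin (weak_topology X) (weak_topology X closure_of A)"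

definition vector_lattice_with_one :: "'a set \<Rightarrow> ('a \<Rightarrow> real) set \<Rightarrow> bool" where
  "vector_lattice_with_one S H \<longleftrightarrow>
     (\<lambda>_. 1) \<in> H \<and>
     (\<forall>f\<in>H. \<forall>g\<in>H. (\<lambda>x. f x + g x) \<in> H) \<and>
     (\<forall>f\<in>H. \<forall>c. (\<lambda>x. c * f x) \<in> H) \<and>
     (\<forall>f\<in>H. \<forall>g\<in>H. (\<lambda>x. max (f x) (g x)) \<in> H)"

definition sublinear_expectation :: "'a set \<Rightarrow> ('a \<Rightarrow> real) set \<Rightarrow> (('a \<Rightarrow> real) \<Rightarrow> real) \<Rightarrow> bool" where
  "sublinear_expectation S H E \<longleftrightarrow>
     (\<forall>f\<in>H. \<forall>g\<in>H. (\<forall>x\<in>S. f x \<le> g x) \<longrightarrow> E f \<le> E g) \<and>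
     (\<forall>c. E (\<lambda>_. c) = c) \<and>
     (\<forall>f\<in>H. \<forall>g\<in>H. E (\<lambda>x. f x + g x) \<le> E f + E g) \<and>
     (\<forall>f\<in>H. \<forall>c\<ge>0. E (\<lambda>x. c * f x) = c * E f)"

definition mixture :: "'a topology \<Rightarrow> (nat \<Rightarrow> 'a measure) \<Rightarrow> 'a measure" where
  "mixture X Q = measure_of (topspace X) (sets (borel_of X))
     (\<lambda>A. \<Sum>n. emeasure (Q n) A / 2 ^ Suc n)"

end

theory Submission
  imports Defs
begin

text \<open>The weak topology on Borel probability measures on \<open>Omega\<close> is second countable:
  finite maxima of countably many continuous tents around piecewise constant grid paths
  approximate every nonnegative \<open>f \<in> Cb Omega_top\<close> from below pointwise, hence in integral,
  so finitely many conditions on the integrals of these maxima describe a neighbourhood base.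
  Hence \<open>\<P>\<close> has a weakly dense sequence \<open>Q\<close>, over which the suprema of integrals of bounded
  continuous functions are the same as over \<open>\<P>\<close>, and the weak closure of \<open>range Q\<close> is compact,
  so each supremum is attained there.  Finally a set is null for the mixture \<open>\<Sum>n. Q n / 2^(n+1)\<close>
  iff it is null for every \<open>Q n\<close>.\<close>

lemma space_borel_of: "space (borel_of X) = topspace X"
  unfolding borel_of_def by (rule space_measure_of) (auto dest: openin_subset)

lemma sets_borel_of: "sets (borel_of X) = sigma_sets (topspace X) {U. openin X U}"
  unfolding borel_of_def by (rule sets_measure_of) (auto dest: openin_subset)

lemma borel_measurable_borel_of:
  assumes "continuous_map X euclideanreal f"
  shows "f \<in> borel_measurable (borel_of X)"
proof (rule borel_measurableI)
  fix S :: "real set" assume "open S"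
  then have "openin X {x \<in> topspace X. f x \<in> S}" using assms unfolding continuous_map_def by auto
  moreover have "f -` S \<inter> space (borel_of X) = {x \<in> topspace X. f x \<in> S}"
    by (auto simp: space_borel_of)
  ultimately show "f -` S \<inter> space (borel_of X) \<in> sets (borel_of X)"
    by (simp add: sets_borel_of sigma_sets.Basic)
qed

lemma borel_probs_prob_space: "P \<in> borel_probs X \<Longrightarrow> prob_space P"
  unfolding borel_probs_def by auto

lemma sets_borel_probs: "P \<in> borel_probs X \<Longrightarrow> sets P = sets (borel_of X)"
  unfolding borel_probs_def by auto

lemma space_borel_probs: "P \<in> borel_probs X \<Longrightarrow> space P = topspace X"
  using sets_borel_probs sets_eq_imp_space_eq space_borel_of by metis

lemma Cb_bounded: "f \<in> Cb X \<Longrightarrow> \<exists>B. \<forall>x\<in>topspace X. \<bar>f x\<bar> \<le> B"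
  unfolding Cb_def by auto

lemma Cb_measurable: "f \<in> Cb X \<Longrightarrow> P \<in> borel_probs X \<Longrightarrow> f \<in> borel_measurable P"
  using borel_measurable_borel_of[of X f] measurable_cong_sets[OF sets_borel_probs refl]
  unfolding Cb_def by blast

lemma Cb_integrable:
  assumes f: "f \<in> Cb X" and P: "P \<in> borel_probs X"
  shows "integrable P f"
proof -
  obtain B where B: "\<forall>x\<in>topspace X. \<bar>f x\<bar> \<le> B" using Cb_bounded[OF f] by auto
  interpret prob_space P using borel_probs_prob_space[OF P] .
  show ?thesis
    by (rule integrable_const_bound[of _ B])
      (use B space_borel_probs[OF P] Cb_measurable[OF f P] in auto)
qed

lemma abs_integral_Cb_le:
  assumes f: "f \<in> Cb X" and P: "P \<in> borel_probs X" and B: "\<forall>x\<in>topspace X. \<bar>f x\<bar> \<le> B"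
  shows "\<bar>integral\<^sup>L P f\<bar> \<le> B"
proof -
  interpret prob_space P using borel_probs_prob_space[OF P] .
  have "\<bar>integral\<^sup>L P f\<bar> \<le> integral\<^sup>L P (\<lambda>x. \<bar>f x\<bar>)"
    using integral_norm_bound[of P f] by simp
  also have "\<dots> \<le> integral\<^sup>L P (\<lambda>_. B)"
    by (rule integral_mono_AE) (use Cb_integrable[OF f P] B space_borel_probs[OF P] in auto)
  finally show ?thesis by (simp add: prob_space)
qed

lemma bdd_above_integral_Cb:
  assumes "f \<in> Cb X" and "A \<subseteq> borel_probs X"
  shows "bdd_above ((\<lambda>P. integral\<^sup>L P f) ` A)"
proof -
  obtain B where "\<forall>x\<in>topspace X. \<bar>f x\<bar> \<le> B" using Cb_bounded[OF assms(1)] by auto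
  then show ?thesis
    using abs_integral_Cb_le[OF assms(1)] assms(2) by (intro bdd_aboveI[of _ B]) force
qed

lemma integral_Cb_mono:
  assumes f: "f \<in> Cb X" and g: "g \<in> Cb X" and P: "P \<in> borel_probs X"
    and le: "\<forall>x\<in>topspace X. f x \<le> g x"
  shows "integral\<^sup>L P f \<le> integral\<^sup>L P g"
  by (rule integral_mono_AE)
    (use Cb_integrable[OF f P] Cb_integrable[OF g P] le space_borel_probs[OF P] in auto)

lemma integral_Cb_add_const:
  assumes "f \<in> Cb X" and "P \<in> borel_probs X"
  shows "integral\<^sup>L P (\<lambda>x. f x + c) = integral\<^sup>L P f + c"
    and "integral\<^sup>L P (\<lambda>x. c - f x) = c - integral\<^sup>L P f"
proof -
  interpret prob_space P using borel_probs_prob_space[OF assms(2)] .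
  show "integral\<^sup>L P (\<lambda>x. f x + c) = integral\<^sup>L P f + c"
    and "integral\<^sup>L P (\<lambda>x. c - f x) = c - integral\<^sup>L P f"
    using Cb_integrable[OF assms] by (simp_all add: prob_space)
qed

lemma Cb_add: "f \<in> Cb X \<Longrightarrow> g \<in> Cb X \<Longrightarrow> (\<lambda>x. f x + g x) \<in> Cb X"
proof -
  assume f: "f \<in> Cb X" and g: "g \<in> Cb X"
  obtain B1 where "\<forall>x\<in>topspace X. \<bar>f x\<bar> \<le> B1" using Cb_bounded[OF f] by auto
  moreover obtain B2 where "\<forall>x\<in>topspace X. \<bar>g x\<bar> \<le> B2" using Cb_bounded[OF g] by auto
  ultimately have "\<forall>x\<in>topspace X. \<bar>f x + g x\<bar> \<le> B1 + B2"
    by (metis abs_triangle_ineq add_mono order_trans)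
  with f g show ?thesis unfolding Cb_def by (auto intro: continuous_map_add)
qed

lemma Cb_const: "(\<lambda>_. c) \<in> Cb X"
  unfolding Cb_def by auto

lemma Cb_uminus: "f \<in> Cb X \<Longrightarrow> (\<lambda>x. - f x) \<in> Cb X"
  unfolding Cb_def by auto

section \<open>The weak topology, dense sequences and mixtures\<close>

lemma topspace_weak_topology: "topspace (weak_topology X) = borel_probs X"
proof -
  have "borel_probs X \<in> {{\<mu> \<in> borel_probs X. integral\<^sup>L \<mu> f \<in> U} | f U. f \<in> Cb X \<and> open U}"
    by (rule CollectI, rule exI[of _ "\<lambda>_. 0"], rule exI[of _ UNIV]) (auto simp: Cb_const)
  then show ?thesis unfolding weak_topology_def by auto
qed

lemma continuous_map_integral_weak_topology:
  assumes "f \<in> Cb X"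
  shows "continuous_map (weak_topology X) euclideanreal (\<lambda>\<mu>. integral\<^sup>L \<mu> f)"
  unfolding continuous_map_def
proof (intro conjI allI impI)
  show "(\<lambda>\<mu>. integral\<^sup>L \<mu> f) \<in> topspace (weak_topology X) \<rightarrow> topspace euclideanreal" by simp
  fix U :: "real set" assume "openin euclideanreal U"
  then have "{\<mu> \<in> borel_probs X. integral\<^sup>L \<mu> f \<in> U} \<in>
      {{\<mu> \<in> borel_probs X. integral\<^sup>L \<mu> f \<in> U} | f U. f \<in> Cb X \<and> open U}"
    using assms by auto
  then show "openin (weak_topology X) {\<mu> \<in> topspace (weak_topology X). integral\<^sup>L \<mu> f \<in> U}"
    unfolding topspace_weak_topology unfolding weak_topology_def openin_topology_generated_by_iff
    by (rule generate_topology_on.Basis)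
qed

lemma second_countable_dense_sequence:
  assumes "second_countable X" and "A \<subseteq> topspace X" and "A \<noteq> {}"
  shows "\<exists>Q :: nat \<Rightarrow> 'a. range Q \<subseteq> A \<and> A \<subseteq> X closure_of range Q"
proof -
  have "separable_space (subtopology X A)"
    by (intro second_countable_imp_separable_space second_countable_subtopology assms(1))
  then obtain C where C: "countable C" "C \<subseteq> A" "subtopology X A closure_of C = A"
    unfolding separable_space_def topspace_subtopology_subset[OF assms(2)] by blast
  have "C \<noteq> {}" using C(3) assms(3) by auto
  then have "range (from_nat_into C) = C" using C(1) by simp
  moreover have "A \<subseteq> X closure_of C" using C(3) closure_of_subtopology_subset[of X A C] by simp
  ultimately show ?thesis using C(2) by (intro exI[of _ "from_nat_into C"]) auto
qed

lemma integral_closure_le_SUP: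
  fixes Q :: "nat \<Rightarrow> 'a measure"
  assumes X: "X \<in> Cb T" and Q: "range Q \<subseteq> borel_probs T"
    and \<nu>: "\<nu> \<in> weak_topology T closure_of range Q"
  shows "integral\<^sup>L \<nu> X \<le> (SUP n. integral\<^sup>L (Q n) X)"
proof (rule ccontr)
  let ?s = "SUP n. integral\<^sup>L (Q n) X"
  let ?U = "{\<mu> \<in> topspace (weak_topology T). integral\<^sup>L \<mu> X \<in> {?s<..}}"
  have meets: "\<exists>\<mu>\<in>range Q. \<mu> \<in> S" if "\<nu> \<in> S" "openin (weak_topology T) S" for S
    using \<nu> that unfolding in_closure_of by blast
  assume "\<not> ?thesis"
  moreover have "\<nu> \<in> topspace (weak_topology T)" by (rule subsetD[OF closure_of_subset_topspace \<nu>])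
  ultimately have \<nu>_U: "\<nu> \<in> ?U" by simp
  have "openin (weak_topology T) ?U"
    by (rule openin_continuous_map_preimage[OF continuous_map_integral_weak_topology[OF X]]) simp
  then obtain \<mu> where \<mu>_Q: "\<mu> \<in> range Q" and \<mu>_U: "\<mu> \<in> ?U" by (rule bexE[OF meets[OF \<nu>_U]])
  obtain n where "\<mu> = Q n" using \<mu>_Q by (rule rangeE)
  then have "?s < integral\<^sup>L (Q n) X" using \<mu>_U by simp
  moreover have "integral\<^sup>L (Q n) X \<le> ?s"
    using bdd_above_integral_Cb[OF X Q] by (intro cSUP_upper) (simp_all add: image_image)
  ultimately show False by simp
qed

lemma SUP_integral_eq_of_dense:
  fixes Q :: "nat \<Rightarrow> 'a measure"
  assumes X: "X \<in> Cb T" and A: "A \<subseteq> borel_probs T" "A \<noteq> {}"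
    and Q: "range Q \<subseteq> A" and dense: "A \<subseteq> weak_topology T closure_of range Q"
  shows "(SUP P\<in>A. integral\<^sup>L P X) = (SUP n. integral\<^sup>L (Q n) X)"
proof (rule antisym)
  show "(SUP P\<in>A. integral\<^sup>L P X) \<le> (SUP n. integral\<^sup>L (Q n) X)"
    using integral_closure_le_SUP[OF X] Q A(1) dense by (intro cSUP_least[OF A(2)]) blast
  show "(SUP n. integral\<^sup>L (Q n) X) \<le> (SUP P\<in>A. integral\<^sup>L P X)"
    using bdd_above_integral_Cb[OF X A(1)] Q by (intro cSUP_least cSUP_upper) auto
qed

lemma SUP_integral_attained_in_closure:
  fixes Q :: "nat \<Rightarrow> 'a measure"
  assumes X: "X \<in> Cb T" and Q: "range Q \<subseteq> borel_probs T"
    and K: "compactin (weak_topology T) (weak_topology T closure_of range Q)"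
  shows "\<exists>QX \<in> weak_topology T closure_of range Q. (SUP n. integral\<^sup>L (Q n) X) = integral\<^sup>L QX X"
proof -
  let ?K = "weak_topology T closure_of range Q"
  have Q_K: "range Q \<subseteq> ?K"
    using Q by (intro closure_of_subset) (simp add: topspace_weak_topology)
  have "compactin euclideanreal ((\<lambda>\<mu>. integral\<^sup>L \<mu> X) ` ?K)"
    by (rule image_compactin[OF K continuous_map_integral_weak_topology[OF X]])
  moreover have "(\<lambda>\<mu>. integral\<^sup>L \<mu> X) ` ?K \<noteq> {}" using Q_K by auto
  ultimately obtain QX where QX: "QX \<in> ?K" "\<And>\<mu>. \<mu> \<in> ?K \<Longrightarrow> integral\<^sup>L \<mu> X \<le> integral\<^sup>L QX X"
    using compact_attains_sup[of "(\<lambda>\<mu>. integral\<^sup>L \<mu> X) ` ?K"] by auto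
  have "(SUP n. integral\<^sup>L (Q n) X) \<le> integral\<^sup>L QX X"
    using QX(2) Q_K by (intro cSUP_least) auto
  moreover have "integral\<^sup>L QX X \<le> (SUP n. integral\<^sup>L (Q n) X)"
    by (rule integral_closure_le_SUP[OF X Q QX(1)])
  ultimately show ?thesis using QX(1) by (intro bexI[of _ QX]) auto
qed

lemma suminf_commute_ennreal:
  fixes f :: "nat \<Rightarrow> nat \<Rightarrow> ennreal"
  shows "(\<Sum>n. \<Sum>i. f n i) = (\<Sum>i. \<Sum>n. f n i)"
proof -
  have "(\<Sum>n. \<Sum>i. f n i) = (\<Sum>n. \<integral>\<^sup>+i. f n i \<partial>count_space UNIV)"
    by (simp add: nn_integral_count_space_nat)
  also have "\<dots> = (\<integral>\<^sup>+i. (\<Sum>n. f n i) \<partial>count_space UNIV)"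
    by (rule nn_integral_suminf[symmetric]) simp
  also have "\<dots> = (\<Sum>i. \<Sum>n. f n i)"
    by (simp add: nn_integral_count_space_nat)
  finally show ?thesis .
qed

lemma sigma_algebra_borel_of: "sigma_algebra (topspace X) (sets (borel_of X))"
  unfolding sets_borel_of by (rule sigma_algebra_sigma_sets) (auto dest: openin_subset)

lemma space_mixture: "space (mixture X Q) = topspace X"
  unfolding mixture_def using sigma_algebra.space_measure_of_eq[OF sigma_algebra_borel_of] .

lemma sets_mixture: "sets (mixture X Q) = sets (borel_of X)"
  unfolding mixture_def using sigma_algebra.sets_measure_of_eq[OF sigma_algebra_borel_of] .

lemma emeasure_mixture:
  assumes Q: "range Q \<subseteq> borel_probs X" and A: "A \<in> sets (borel_of X)"
  shows "emeasure (mixture X Q) A = (\<Sum>n. emeasure (Q n) A / 2 ^ Suc n)"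
  unfolding mixture_def
proof (rule emeasure_measure_of_sigma[OF sigma_algebra_borel_of _ _ A])
  show "positive (sets (borel_of X)) (\<lambda>A. \<Sum>n. emeasure (Q n) A / 2 ^ Suc n)"
    unfolding positive_def by simp
  show "countably_additive (sets (borel_of X)) (\<lambda>A. \<Sum>n. emeasure (Q n) A / 2 ^ Suc n)"
    unfolding countably_additive_def
  proof (intro allI impI)
    fix B :: "nat \<Rightarrow> _" assume B: "range B \<subseteq> sets (borel_of X)" "disjoint_family B"
    have "(\<Sum>i. \<Sum>n. emeasure (Q n) (B i) / 2 ^ Suc n) = (\<Sum>n. \<Sum>i. emeasure (Q n) (B i) / 2 ^ Suc n)"
      by (rule suminf_commute_ennreal[symmetric])
    also have "\<dots> = (\<Sum>n. emeasure (Q n) (\<Union>i. B i) / 2 ^ Suc n)"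
      using B sets_borel_probs[OF range_subsetD[OF Q]] by (simp add: suminf_emeasure)
    finally show "(\<Sum>i. \<Sum>n. emeasure (Q n) (B i) / 2 ^ Suc n) = (\<Sum>n. emeasure (Q n) (\<Union>(range B)) / 2 ^ Suc n)" .
  qed
qed

lemma emeasure_mixture_eq_0_iff:
  assumes "range Q \<subseteq> borel_probs X" and "A \<in> sets (borel_of X)"
  shows "emeasure (mixture X Q) A = 0 \<longleftrightarrow> (\<forall>n. emeasure (Q n) A = 0)"
proof -
  have "emeasure (mixture X Q) A = 0 \<longleftrightarrow> (\<forall>n. emeasure (Q n) A / 2 ^ Suc n = 0)"
    unfolding emeasure_mixture[OF assms] by (rule suminf_eq_zero_iff) auto
  also have "\<dots> \<longleftrightarrow> (\<forall>n. emeasure (Q n) A = 0)"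
    by (simp add: ennreal_mult_eq_top_iff power_eq_top_ennreal)
  finally show ?thesis .
qed

lemma SUP_integral_eq_0_iff_AE_mixture:
  assumes f: "f \<in> Cb X" and nonneg: "\<forall>x\<in>topspace X. 0 \<le> f x" and Q: "range Q \<subseteq> borel_probs X"
  shows "(SUP n. integral\<^sup>L (Q n) f) = 0 \<longleftrightarrow> (AE x in mixture X Q. f x = 0)"
proof -
  define N where "N = {x \<in> topspace X. f x \<noteq> 0}"
  have "openin X {x \<in> topspace X. f x \<in> - {0}}"
    by (rule openin_continuous_map_preimage) (use f in \<open>auto simp: Cb_def\<close>)
  then have N: "N \<in> sets (borel_of X)"
    unfolding N_def sets_borel_of by (auto intro: sigma_sets.Basic)
  have Qn: "Q n \<in> borel_probs X" for n using Q by auto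
  have integral_eq_0: "integral\<^sup>L (Q n) f = 0 \<longleftrightarrow> emeasure (Q n) N = 0" for n
  proof -
    have "integral\<^sup>L (Q n) f = 0 \<longleftrightarrow> (AE x in Q n. f x = 0)"
      by (rule integral_nonneg_eq_0_iff_AE)
        (use Cb_integrable[OF f Qn] nonneg space_borel_probs[OF Qn] in auto)
    also have "\<dots> \<longleftrightarrow> emeasure (Q n) N = 0"
      by (rule AE_iff_measurable) (use N sets_borel_probs[OF Qn] space_borel_probs[OF Qn] N_def in auto)
    finally show ?thesis .
  qed
  have "(SUP n. integral\<^sup>L (Q n) f) = 0 \<longleftrightarrow> (\<forall>n. integral\<^sup>L (Q n) f = 0)"
  proof
    assume SUP_0: "(SUP n. integral\<^sup>L (Q n) f) = 0"
    show "\<forall>n. integral\<^sup>L (Q n) f = 0"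
    proof
      fix n
      have "0 \<le> integral\<^sup>L (Q n) f"
        by (rule integral_nonneg_AE) (use nonneg space_borel_probs[OF Qn] in auto)
      moreover have "integral\<^sup>L (Q n) f \<le> (SUP n. integral\<^sup>L (Q n) f)"
        using bdd_above_integral_Cb[OF f Q] by (intro cSUP_upper) (auto simp: image_image)
      ultimately show "integral\<^sup>L (Q n) f = 0" using SUP_0 by linarith
    qed
  qed simp
  also have "\<dots> \<longleftrightarrow> emeasure (mixture X Q) N = 0"
    using integral_eq_0 emeasure_mixture_eq_0_iff[OF Q N] by simp
  also have "\<dots> \<longleftrightarrow> (AE x in mixture X Q. f x = 0)"
    by (rule AE_iff_measurable[symmetric]) (use N N_def in \<open>auto simp: sets_mixture space_mixture\<close>)
  finally show ?thesis .
qed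

section \<open>The path space\<close>

lemma openin_Omega_top: "openin Omega_top U \<longleftrightarrow> ucc_open U"
  unfolding Omega_top_def by (metis topology_inverse'[OF istopology_ucc_open])

lemma topspace_Omega_top: "topspace Omega_top = Omega"
proof -
  have "ucc_open Omega" unfolding ucc_open_def by (auto intro: exI[of _ 1])
  then have "Omega \<subseteq> topspace Omega_top"
    using openin_subset openin_Omega_top by metis
  moreover have "topspace Omega_top \<subseteq> Omega"
    using openin_Omega_top[of "topspace Omega_top"] ucc_open_def by auto
  ultimately show ?thesis by auto
qed

lemma continuous_map_Omega_topI:
  assumes "\<And>w r. w \<in> Omega \<Longrightarrow> r > 0 \<Longrightarrow> \<exists>T>0. \<exists>e>0. \<forall>w'\<in>Omega.
      (\<forall>t\<in>{0..T}. dist (w' t) (w t) < e) \<longrightarrow> \<bar>\<phi> w' - \<phi> w\<bar> < r"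
  shows "continuous_map Omega_top euclideanreal \<phi>"
  unfolding continuous_map_def
proof (intro conjI allI impI)
  show "\<phi> \<in> topspace Omega_top \<rightarrow> topspace euclideanreal" by simp
  fix U :: "real set" assume "openin euclideanreal U"
  then have oU: "open U" by simp
  show "openin Omega_top {x \<in> topspace Omega_top. \<phi> x \<in> U}"
    unfolding openin_Omega_top topspace_Omega_top ucc_open_def
  proof (intro conjI ballI)
    fix w assume w: "w \<in> {x \<in> Omega. \<phi> x \<in> U}"
    obtain r where r: "r > 0" "ball (\<phi> w) r \<subseteq> U" using oU w open_contains_ball by blast
    obtain T e where Te: "T > 0" "e > 0" "\<forall>w'\<in>Omega.
      (\<forall>t\<in>{0..T}. dist (w' t) (w t) < e) \<longrightarrow> \<bar>\<phi> w' - \<phi> w\<bar> < r"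
      using assms[of w r] w r by auto
    show "\<exists>T>0. \<exists>e>0. \<forall>w'\<in>Omega. (\<forall>t\<in>{0..T}. dist (w' t) (w t) < e) \<longrightarrow> w' \<in> {x \<in> Omega. \<phi> x \<in> U}"
    proof (intro exI conjI ballI impI)
      fix w' assume "w' \<in> Omega" "\<forall>t\<in>{0..T}. dist (w' t) (w t) < e"
      then have "\<bar>\<phi> w' - \<phi> w\<bar> < r" using Te by blast
      then have "\<phi> w' \<in> ball (\<phi> w) r" by (simp add: dist_real_def abs_minus_commute)
      then show "w' \<in> {x \<in> Omega. \<phi> x \<in> U}" using r \<open>w' \<in> Omega\<close> by auto
    qed (use Te in auto)
  qed auto
qed

definition ucc_dist :: "nat \<Rightarrow> (real \<Rightarrow> real^'d::finite) \<Rightarrow> (real \<Rightarrow> real^'d) \<Rightarrow> real" where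
  "ucc_dist n w v = Sup ((\<lambda>t. min 1 (dist (w t) (v t))) ` {0..real n})"

lemma ucc_dist_upper: "t \<in> {0..real n} \<Longrightarrow> min 1 (dist (w t) (v t)) \<le> ucc_dist n w v"
  unfolding ucc_dist_def by (rule cSup_upper) (auto intro!: bdd_aboveI[of _ 1])

lemma ucc_dist_least:
  "(\<And>t. t \<in> {0..real n} \<Longrightarrow> min 1 (dist (w t) (v t)) \<le> c) \<Longrightarrow> ucc_dist n w v \<le> c"
  unfolding ucc_dist_def by (rule cSup_least) auto

lemma dist_less_if_ucc_dist_less:
  "ucc_dist n w v < e \<Longrightarrow> e \<le> 1 \<Longrightarrow> t \<in> {0..real n} \<Longrightarrow> dist (w t) (v t) < e"
  using ucc_dist_upper[of t n w v] by linarith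

lemma ucc_dist_triangle:
  assumes "\<And>t. t \<in> {0..real n} \<Longrightarrow> dist (w' t) (w t) \<le> d" and "0 \<le> d"
  shows "ucc_dist n w' v \<le> ucc_dist n w v + d"
proof (rule ucc_dist_least)
  fix t assume t: "t \<in> {0..real n}"
  have "dist (w' t) (v t) \<le> dist (w t) (v t) + dist (w' t) (w t)"
    by (metis dist_commute dist_triangle add.commute)
  then show "min 1 (dist (w' t) (v t)) \<le> ucc_dist n w v + d"
    using ucc_dist_upper[OF t, of w v] assms(1)[OF t] assms(2) by (auto simp: min_def split: if_splits)
qed

lemma continuous_map_ucc_dist:
  fixes v :: "real \<Rightarrow> real^'d::finite"
  shows "continuous_map Omega_top euclideanreal (\<lambda>w. ucc_dist n w v)"
proof (rule continuous_map_Omega_topI)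
  fix w :: "real \<Rightarrow> real^'d" and r :: real assume "r > 0"
  have "\<bar>ucc_dist n w' v - ucc_dist n w v\<bar> < r"
    if "\<forall>t\<in>{0..real n + 1}. dist (w' t) (w t) < r / 2" for w'
  proof -
    have d: "dist (w' t) (w t) \<le> r/2" "dist (w t) (w' t) \<le> r/2" if "t \<in> {0..real n}" for t
    proof -
      have "t \<in> {0..real n + 1}" using that by auto
      then have "dist (w' t) (w t) < r/2" using \<open>\<forall>t\<in>{0..real n + 1}. _\<close> by blast
      then show "dist (w' t) (w t) \<le> r/2" "dist (w t) (w' t) \<le> r/2" by (simp_all add: dist_commute)
    qed
    show ?thesis
      using ucc_dist_triangle[of n w' w "r/2" v] ucc_dist_triangle[of n w w' "r/2" v] d \<open>r > 0\<close>
      by fastforce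
  qed
  then show "\<exists>T>0. \<exists>e>0. \<forall>w'\<in>Omega.
      (\<forall>t\<in>{0..T}. dist (w' t) (w t) < e) \<longrightarrow> \<bar>ucc_dist n w' v - ucc_dist n w v\<bar> < r"
    using \<open>r > 0\<close> by (intro exI[of _ "real n + 1"] exI[of _ "r/2"] conjI) (auto simp del: atLeastAtMost_iff)
qed

lemma ucc_open_contains_ucc_ball:
  assumes "ucc_open U" and "w \<in> U"
  obtains n e where "e > 0"
    and "\<And>x v. x \<in> Omega \<Longrightarrow> ucc_dist n x v < e \<Longrightarrow> ucc_dist n w v < e \<Longrightarrow> x \<in> U"
proof -
  obtain T e0 where T: "T > 0" "e0 > 0"
    "\<forall>x\<in>Omega. (\<forall>t\<in>{0..T}. dist (x t) (w t) < e0) \<longrightarrow> x \<in> U"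
    using assms unfolding ucc_open_def by blast
  define n where "n = nat \<lceil>T\<rceil>"
  define e where "e = min e0 1 / 2"
  have nT: "T \<le> real n" unfolding n_def by linarith
  have "x \<in> U" if x: "x \<in> Omega" "ucc_dist n x v < e" "ucc_dist n w v < e" for x v
  proof -
    have "dist (x t) (w t) < e0" if "t \<in> {0..T}" for t
    proof -
      have t: "t \<in> {0..real n}" using that nT by auto
      have "dist (x t) (v t) < e" "dist (w t) (v t) < e"
        using dist_less_if_ucc_dist_less[OF x(2) _ t] dist_less_if_ucc_dist_less[OF x(3) _ t]
        by (auto simp: e_def)
      then show ?thesis using dist_triangle3[of "x t" "w t" "v t"] by (simp add: e_def dist_commute)
    qed
    then show ?thesis using T(3) x(1) by blast
  qed
  moreover have "e > 0" using T(2) by (simp add: e_def)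
  ultimately show thesis using that by blast
qed

text \<open>\<open>grid_path (N, M, L)\<close> is the step path with time mesh \<open>1/N\<close> whose values, taken
  from \<open>L\<close>, lie in the lattice \<open>(1/M) \<int>^d\<close>.\<close>

definition grid_path :: "nat \<times> nat \<times> ('d \<Rightarrow> int) list \<Rightarrow> real \<Rightarrow> real^'d::finite" where
  "grid_path V t = (case V of (N, M, L) \<Rightarrow> (\<chi> i. real_of_int ((L ! nat \<lfloor>t * real N\<rfloor>) i) / real M))"

lemma dist_grid_point_le:
  fixes x :: "real^'d::finite"
  assumes "M > 0"
  shows "dist x (\<chi> i. real_of_int \<lfloor>x$i * M\<rfloor> / M) \<le> CARD('d) / M"
proof -
  have c: "\<bar>x$i - real_of_int \<lfloor>x$i * M\<rfloor> / M\<bar> \<le> 1 / M" for i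
  proof -
    have "real_of_int \<lfloor>x$i * M\<rfloor> \<le> x$i * M" "x$i * M < real_of_int \<lfloor>x$i * M\<rfloor> + 1"
      by linarith+
    then have "real_of_int \<lfloor>x$i * M\<rfloor> / M \<le> x$i" "x$i < real_of_int \<lfloor>x$i * M\<rfloor> / M + 1 / M"
      using assms by (auto simp: field_simps)
    then show ?thesis by auto
  qed
  have "dist x (\<chi> i. real_of_int \<lfloor>x$i * M\<rfloor> / M) \<le> (\<Sum>i\<in>UNIV. \<bar>(x - (\<chi> i. real_of_int \<lfloor>x$i * M\<rfloor> / M))$i\<bar>)"
    unfolding dist_norm by (rule norm_le_l1_cart)
  also have "\<dots> \<le> (\<Sum>i\<in>(UNIV::'d set). 1 / M)"
    by (rule sum_mono) (use c in simp)
  finally show ?thesis by simp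
qed

lemma grid_path_sample:
  fixes w :: "real \<Rightarrow> real^'d::finite" and n N M :: nat
  assumes "N > 0" and "t \<in> {0..real n}"
    and L_def: "L = map (\<lambda>k. \<lambda>i. \<lfloor>(w (real k / real N))$i * real M\<rfloor>) [0..<n*N+1]"
    and k_def: "k = nat \<lfloor>t * real N\<rfloor>"
  shows "grid_path (N, M, L) t = (\<chi> i. real_of_int \<lfloor>(w (real k / real N))$i * real M\<rfloor> / real M)"
    and "real k / real N \<in> {0..t}" and "t < real k / real N + 1 / real N"
proof -
  have k: "real k \<le> t * real N" "t * real N < real k + 1"
    using assms(1,2) unfolding k_def by auto
  have "t * real N \<le> real n * real N" using assms(1,2) by (auto intro: mult_right_mono)
  then have "real k \<le> real (n * N)" using k by simp
  then have "k < n * N + 1" by linarith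
  then show "grid_path (N, M, L) t = (\<chi> i. real_of_int \<lfloor>(w (real k / real N))$i * real M\<rfloor> / real M)"
    unfolding grid_path_def L_def k_def by (simp del: upt_Suc)
  show "real k / real N \<in> {0..t}" "t < real k / real N + 1 / real N"
    using k assms(1) by (auto simp: field_simps)
qed

lemma ucc_dist_grid_path_less:
  fixes w :: "real \<Rightarrow> real^'d::finite"
  assumes w: "w \<in> Omega" and e: "e > 0"
  shows "\<exists>V. ucc_dist n w (grid_path V) < e"
proof -
  have "continuous_on {0..real n} w"
    using w unfolding Omega_def by (auto intro: continuous_on_subset)
  then have "uniformly_continuous_on {0..real n} w"
    by (rule compact_uniformly_continuous) simp
  then obtain d where d: "d > 0"
    "\<And>x x'. x \<in> {0..real n} \<Longrightarrow> x' \<in> {0..real n} \<Longrightarrow> dist x' x < d \<Longrightarrow> dist (w x') (w x) < e/3"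
    unfolding uniformly_continuous_on_def using e by (metis divide_pos_pos zero_less_numeral)
  obtain N :: nat where N: "1 / d < real N" using reals_Archimedean2 by blast
  have Npos: "N > 0" using N d(1) by (cases N) (auto simp: field_simps)
  have Nd: "1 / real N < d" using N d(1) Npos by (simp add: field_simps)
  obtain M :: nat where M: "3 * CARD('d) / e < real M" using reals_Archimedean2 by blast
  have Mpos: "real M > 0" using M e by (cases M) (auto simp: field_simps)
  have Me: "CARD('d) / real M < e / 3" using M Mpos e by (simp add: field_simps)
  define L where "L = map (\<lambda>k. \<lambda>i. \<lfloor>(w (real k / real N))$i * real M\<rfloor>) [0..<n*N+1]"
  have "ucc_dist n w (grid_path (N, M, L)) \<le> 2 * e / 3"
  proof (rule ucc_dist_least)
    fix t assume t: "t \<in> {0..real n}"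
    define k where "k = nat \<lfloor>t * real N\<rfloor>"
    define s where "s = real k / real N"
    note sample = grid_path_sample[OF Npos t L_def k_def, folded s_def]
    have "dist t s < d" using sample(2,3) Nd by (simp add: dist_real_def)
    then have "dist (w t) (w s) < e/3" using d(2)[of s t] sample(2) t by simp
    moreover have "dist (w s) (grid_path (N, M, L) t) < e/3"
      unfolding sample(1) using dist_grid_point_le[OF Mpos, of "w s"] Me by linarith
    ultimately show "min 1 (dist (w t) (grid_path (N, M, L) t)) \<le> 2 * e / 3"
      using dist_triangle[of "w t" "grid_path (N, M, L) t" "w s"] by linarith
  qed
  then show ?thesis using e by (intro exI[of _ "(N, M, L)"]) linarith
qed

section \<open>Second countability of the weak topology on the path space\<close>

type_synonym 'd bump_code = "rat \<times> (nat \<times> nat \<times> ('d \<Rightarrow> int) list) \<times> nat \<times> rat \<times> nat"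

text \<open>The code \<open>(c, V, n, e, m)\<close> describes a tent of height \<open>c\<close> and slope \<open>m\<close>
  supported in the \<open>ucc_dist n\<close>-ball of radius \<open>e\<close> around the grid path \<open>V\<close>.\<close>

definition bump :: "'d::finite bump_code \<Rightarrow> (real \<Rightarrow> real^'d) \<Rightarrow> real" where
  "bump a w = (case a of (c, V, n, e, m) \<Rightarrow>
     max 0 (real_of_rat c) * min 1 (real m * max 0 (real_of_rat e - ucc_dist n w (grid_path V))))"

lemma bump_le_height: "bump a w \<le> max 0 (real_of_rat (fst a))"
  unfolding bump_def by (auto split: prod.splits intro!: mult_left_le)

lemma bump_eq_0: "real_of_rat e \<le> ucc_dist n w (grid_path V) \<Longrightarrow> bump (c, V, n, e, m) w = 0"
  unfolding bump_def by simp

lemma bump_eq_height: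
  assumes "1 \<le> real m * (real_of_rat e - ucc_dist n w (grid_path V))"
  shows "bump (c, V, n, e, m) w = max 0 (real_of_rat c)"
proof -
  have "0 \<le> real_of_rat e - ucc_dist n w (grid_path V)"
  proof (rule ccontr)
    assume "\<not> ?thesis"
    then have "real m * (real_of_rat e - ucc_dist n w (grid_path V)) \<le> 0"
      by (simp add: mult_nonneg_nonpos)
    then show False using assms by linarith
  qed
  then show ?thesis using assms by (simp add: bump_def)
qed

lemma continuous_map_bump: "continuous_map Omega_top euclideanreal (bump a)"
proof -
  obtain c V n e m where a: "a = (c, V, n, e, m)" by (cases a) auto
  show ?thesis
    unfolding a bump_def prod.case
    by (intro continuous_map_real_mult continuous_map_real_min continuous_map_real_max
        continuous_map_diff continuous_map_ucc_dist) auto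
qed

fun max_bumps :: "'d::finite bump_code list \<Rightarrow> (real \<Rightarrow> real^'d) \<Rightarrow> real" where
  "max_bumps [] w = 0"
| "max_bumps (a # L) w = max (bump a w) (max_bumps L w)"

lemma max_bumps_nonneg: "0 \<le> max_bumps L w"
  by (induction L) auto

lemma bump_le_max_bumps: "a \<in> set L \<Longrightarrow> bump a w \<le> max_bumps L w"
  by (induction L) auto

lemma max_bumps_least: "(\<And>a. a \<in> set L \<Longrightarrow> bump a w \<le> c) \<Longrightarrow> 0 \<le> c \<Longrightarrow> max_bumps L w \<le> c"
  by (induction L) auto

lemma continuous_map_max_bumps: "continuous_map Omega_top euclideanreal (max_bumps L)"
proof (induction L)
  case Nil
  have "max_bumps [] = (\<lambda>_. 0)" by auto
  then show ?case by simp
next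
  case (Cons a L)
  have "max_bumps (a # L) = (\<lambda>w. max (bump a w) (max_bumps L w))" by auto
  then show ?case using Cons continuous_map_bump by (metis continuous_map_real_max)
qed

lemma max_bumps_le_sum_heights: "max_bumps L w \<le> (\<Sum>a\<leftarrow>L. max 0 (real_of_rat (fst a)))"
proof (induction L)
  case (Cons a L)
  have "0 \<le> (\<Sum>a\<leftarrow>L. max 0 (real_of_rat (fst a)))"
    by (rule sum_list_nonneg) auto
  then show ?case using Cons bump_le_height[of a w] by auto
qed simp

lemma max_bumps_Cb: "max_bumps L \<in> Cb Omega_top"
proof -
  have "\<bar>max_bumps L w\<bar> \<le> (\<Sum>a\<leftarrow>L. max 0 (real_of_rat (fst a)))" for w
    using max_bumps_le_sum_heights[of L w] max_bumps_nonneg[of L w] by simp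
  then show ?thesis unfolding Cb_def using continuous_map_max_bumps by blast
qed

lemma bump_below_approx:
  fixes f :: "(real \<Rightarrow> real^'d::finite) \<Rightarrow> real"
  assumes f: "f \<in> Cb Omega_top" and nonneg: "\<forall>x\<in>Omega. 0 \<le> f x"
    and w: "w \<in> Omega" and \<epsilon>: "\<epsilon> > 0"
  shows "\<exists>a :: 'd bump_code. (\<forall>x\<in>Omega. bump a x \<le> f x) \<and> f w - \<epsilon> < bump a w"
proof (cases "f w < \<epsilon>")
  case True
  then show ?thesis
    using nonneg by (intro exI[of _ "(0, (0, 0, []), 0, 0, 0)"]) (auto simp: bump_def)
next
  case False
  obtain c where c: "c \<in> \<rat>" "f w - \<epsilon> < c" "c < f w"
    using Rats_dense_in_real[of "f w - \<epsilon>" "f w"] \<epsilon> by auto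
  obtain cq where cq: "c = real_of_rat cq" using c(1) Rats_cases by blast
  define U where "U = {x \<in> Omega. c < f x}"
  have "openin Omega_top {x \<in> topspace Omega_top. f x \<in> {c<..}}"
    using f unfolding Cb_def by (intro openin_continuous_map_preimage) auto
  then have "ucc_open U" by (simp add: U_def openin_Omega_top topspace_Omega_top)
  moreover have "w \<in> U" using w c(3) by (simp add: U_def)
  ultimately obtain n e where e: "e > 0"
    and ball: "\<And>x v. x \<in> Omega \<Longrightarrow> ucc_dist n x v < e \<Longrightarrow> ucc_dist n w v < e \<Longrightarrow> x \<in> U"
    by (rule ucc_open_contains_ucc_ball) (rule that)
  obtain q where q: "q \<in> \<rat>" "0 < q" "q < e" using Rats_dense_in_real[of 0 e] e by auto
  obtain qr where qr: "q = real_of_rat qr" using q(1) Rats_cases by blast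
  obtain V where V: "ucc_dist n w (grid_path V) < q" using ucc_dist_grid_path_less[OF w q(2)] by blast
  define m where "m = nat \<lceil>1 / (q - ucc_dist n w (grid_path V))\<rceil>"
  have "1 / (q - ucc_dist n w (grid_path V)) \<le> real m" unfolding m_def by linarith
  then have m: "1 \<le> real m * (q - ucc_dist n w (grid_path V))" using V by (simp add: field_simps)
  let ?a = "(cq, V, n, qr, m)"
  have "bump ?a x \<le> f x" if x: "x \<in> Omega" for x
  proof (cases "ucc_dist n x (grid_path V) < q")
    case True
    have "x \<in> U" using ball[OF x less_trans[OF True q(3)] less_trans[OF V q(3)]] .
    then have "c < f x" by (simp add: U_def)
    then show ?thesis using bump_le_height[of ?a x] cq nonneg x by auto
  next
    case False
    then show ?thesis using bump_eq_0[of qr n x V cq m] qr nonneg x by simp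
  qed
  moreover have "bump ?a w = c"
    using bump_eq_height[of m qr n w V cq] m qr cq c(2) False by simp
  ultimately show ?thesis using c(2) by (intro exI[of _ ?a]) auto
qed

lemma max_bumps_pointwise_approx:
  fixes f :: "(real \<Rightarrow> real^'d::finite) \<Rightarrow> real"
  assumes f: "f \<in> Cb Omega_top" and nonneg: "\<forall>x\<in>Omega. 0 \<le> f x"
  obtains s :: "nat \<Rightarrow> 'd bump_code list"
  where "\<And>k x. x \<in> Omega \<Longrightarrow> max_bumps (s k) x \<le> f x"
    and "\<And>x. x \<in> Omega \<Longrightarrow> (\<lambda>k. max_bumps (s k) x) \<longlonglongrightarrow> f x"
proof -
  define A where "A = {a :: 'd bump_code. \<forall>x\<in>Omega. bump a x \<le> f x}"
  have "(0, (0, 0, []), 0, 0, 0) \<in> A"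
    unfolding A_def using nonneg by (auto simp: bump_def)
  then have A: "A \<noteq> {}" "countable A" by auto
  define s where "s k = map (from_nat_into A) [0..<k]" for k
  have le: "max_bumps (s k) x \<le> f x" if "x \<in> Omega" for k x
    using from_nat_into[OF A(1)] that nonneg
    by (intro max_bumps_least) (auto simp: s_def A_def)
  have "(\<lambda>k. max_bumps (s k) x) \<longlonglongrightarrow> f x" if x: "x \<in> Omega" for x
  proof (rule LIMSEQ_I)
    fix \<epsilon> :: real assume "0 < \<epsilon>"
    then obtain a where a: "a \<in> A" "f x - \<epsilon> < bump a x"
      using bump_below_approx[OF f nonneg x] unfolding A_def by blast
    have "norm (max_bumps (s k) x - f x) < \<epsilon>" if k: "k \<ge> Suc (to_nat_on A a)" for k
    proof -
      have "a \<in> set (s k)" unfolding s_def using k a(1) A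
        by (auto intro!: image_eqI[of a _ "to_nat_on A a"])
      then show ?thesis using bump_le_max_bumps[of a "s k" x] le[OF x, of k] a(2) by simp
    qed
    then show "\<exists>k0. \<forall>k\<ge>k0. norm (max_bumps (s k) x - f x) < \<epsilon>" by blast
  qed
  with le show thesis using that by blast
qed

lemma integral_max_bumps_approx:
  fixes f :: "(real \<Rightarrow> real^'d::finite) \<Rightarrow> real"
  assumes f: "f \<in> Cb Omega_top" and nonneg: "\<forall>x\<in>Omega. 0 \<le> f x"
    and \<mu>: "\<mu> \<in> borel_probs Omega_top" and r: "r > 0"
  shows "\<exists>L :: 'd bump_code list.
    (\<forall>x\<in>Omega. max_bumps L x \<le> f x) \<and> integral\<^sup>L \<mu> f - r < integral\<^sup>L \<mu> (max_bumps L)"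
proof -
  obtain s :: "nat \<Rightarrow> 'd bump_code list"
    where le: "\<And>k x. x \<in> Omega \<Longrightarrow> max_bumps (s k) x \<le> f x"
      and lim: "\<And>x. x \<in> Omega \<Longrightarrow> (\<lambda>k. max_bumps (s k) x) \<longlonglongrightarrow> f x"
    using max_bumps_pointwise_approx[OF f nonneg] by blast
  have space: "space \<mu> = Omega" using space_borel_probs[OF \<mu>] topspace_Omega_top by simp
  have "(\<lambda>k. integral\<^sup>L \<mu> (max_bumps (s k))) \<longlonglongrightarrow> integral\<^sup>L \<mu> f"
  proof (rule integral_dominated_convergence[where w = f])
    show "f \<in> borel_measurable \<mu>" "integrable \<mu> f"
      using Cb_measurable[OF f \<mu>] Cb_integrable[OF f \<mu>] .
    show "max_bumps (s k) \<in> borel_measurable \<mu>" for k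
      using Cb_measurable[OF max_bumps_Cb \<mu>] .
    show "AE x in \<mu>. (\<lambda>k. max_bumps (s k) x) \<longlonglongrightarrow> f x" using lim space by auto
    show "AE x in \<mu>. norm (max_bumps (s k) x) \<le> f x" for k
      using le space by (auto simp: max_bumps_nonneg)
  qed
  then obtain k where "\<bar>integral\<^sup>L \<mu> (max_bumps (s k)) - integral\<^sup>L \<mu> f\<bar> < r"
    using r by (metis LIMSEQ_D real_norm_def order_refl)
  then show ?thesis using le by (intro exI[of _ "s k"]) auto
qed

definition weak_basic :: "('d::finite bump_code list \<times> rat \<times> rat) list \<Rightarrow> (real \<Rightarrow> real^'d) measure set" where
  "weak_basic K = {\<nu> \<in> borel_probs Omega_top. \<forall>(L, a, b) \<in> set K.
      real_of_rat a < integral\<^sup>L \<nu> (max_bumps L) \<and> integral\<^sup>L \<nu> (max_bumps L) < real_of_rat b}"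

lemma weak_basic_append: "weak_basic (K1 @ K2) = weak_basic K1 \<inter> weak_basic K2"
  unfolding weak_basic_def by (auto simp: Ball_def split: prod.splits)

lemma openin_weak_basic: "openin (weak_topology Omega_top) (weak_basic K)"
proof (induction K)
  case Nil
  show ?case using openin_topspace[of "weak_topology Omega_top"]
    by (simp add: weak_basic_def topspace_weak_topology)
next
  case (Cons k K)
  obtain L a b where k: "k = (L, a, b)" by (cases k) auto
  have "openin (weak_topology Omega_top)
      {\<mu> \<in> topspace (weak_topology Omega_top). integral\<^sup>L \<mu> (max_bumps L) \<in> {real_of_rat a<..<real_of_rat b}}"
    by (rule openin_continuous_map_preimage[OF continuous_map_integral_weak_topology[OF max_bumps_Cb]]) simp
  moreover have "weak_basic (k # K) =
      {\<mu> \<in> topspace (weak_topology Omega_top). integral\<^sup>L \<mu> (max_bumps L) \<in> {real_of_rat a<..<real_of_rat b}}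
      \<inter> weak_basic K"
    unfolding k weak_basic_def topspace_weak_topology by auto
  ultimately show ?case using Cons.IH by (simp add: openin_Int)
qed

lemma weak_basic_integral_lower:
  fixes f :: "(real \<Rightarrow> real^'d::finite) \<Rightarrow> real"
  assumes f: "f \<in> Cb Omega_top" and nonneg: "\<forall>x\<in>Omega. 0 \<le> f x"
    and \<mu>: "\<mu> \<in> borel_probs Omega_top" and r: "r > 0"
  shows "\<exists>K :: ('d bump_code list \<times> rat \<times> rat) list.
    \<mu> \<in> weak_basic K \<and> (\<forall>\<nu>\<in>weak_basic K. integral\<^sup>L \<mu> f - r < integral\<^sup>L \<nu> f)"
proof -
  obtain L :: "'d bump_code list" where L: "\<forall>x\<in>Omega. max_bumps L x \<le> f x"
    "integral\<^sup>L \<mu> f - r / 2 < integral\<^sup>L \<mu> (max_bumps L)"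
    using integral_max_bumps_approx[OF f nonneg \<mu>, of "r / 2"] r by auto
  define I where "I = integral\<^sup>L \<mu> (max_bumps L)"
  obtain a where a: "a \<in> \<rat>" "I - r / 2 < a" "a < I"
    using Rats_dense_in_real[of "I - r / 2" I] r by auto
  obtain b where b: "b \<in> \<rat>" "I < b" using Rats_dense_in_real[of I "I + 1"] by auto
  obtain qa qb where q: "a = real_of_rat qa" "b = real_of_rat qb" using a(1) b(1) Rats_cases by metis
  have "\<mu> \<in> weak_basic [(L, qa, qb)]" using \<mu> a b q by (simp add: weak_basic_def I_def)
  moreover have "integral\<^sup>L \<mu> f - r < integral\<^sup>L \<nu> f" if \<nu>: "\<nu> \<in> weak_basic [(L, qa, qb)]" for \<nu>
  proof -
    have "\<nu> \<in> borel_probs Omega_top" and "a < integral\<^sup>L \<nu> (max_bumps L)"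
      using \<nu> q by (auto simp: weak_basic_def)
    moreover have "integral\<^sup>L \<nu> (max_bumps L) \<le> integral\<^sup>L \<nu> f"
      using integral_Cb_mono[OF max_bumps_Cb f] L(1) topspace_Omega_top calculation(1) by metis
    ultimately show ?thesis using L(2) a(2) unfolding I_def by linarith
  qed
  ultimately show ?thesis by blast
qed

lemma weak_basic_integral_near:
  fixes f :: "(real \<Rightarrow> real^'d::finite) \<Rightarrow> real"
  assumes f: "f \<in> Cb Omega_top" and \<mu>: "\<mu> \<in> borel_probs Omega_top" and r: "r > 0"
  shows "\<exists>K :: ('d bump_code list \<times> rat \<times> rat) list.
    \<mu> \<in> weak_basic K \<and> (\<forall>\<nu>\<in>weak_basic K. \<bar>integral\<^sup>L \<nu> f - integral\<^sup>L \<mu> f\<bar> < r)"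
proof -
  obtain B where B: "\<forall>x\<in>Omega. \<bar>f x\<bar> \<le> B" using Cb_bounded[OF f] topspace_Omega_top by auto
  have f1: "(\<lambda>x. f x + B) \<in> Cb Omega_top" "\<forall>x\<in>Omega. 0 \<le> f x + B"
    using Cb_add[OF f Cb_const] B by auto
  have f2: "(\<lambda>x. B - f x) \<in> Cb Omega_top" "\<forall>x\<in>Omega. 0 \<le> B - f x"
    using Cb_add[OF Cb_const Cb_uminus[OF f], of B] B by auto
  obtain K1 :: "('d bump_code list \<times> rat \<times> rat) list" where K1: "\<mu> \<in> weak_basic K1"
    "\<forall>\<nu>\<in>weak_basic K1. integral\<^sup>L \<mu> (\<lambda>x. f x + B) - r < integral\<^sup>L \<nu> (\<lambda>x. f x + B)"
    using weak_basic_integral_lower[OF f1 \<mu> r] by blast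
  obtain K2 :: "('d bump_code list \<times> rat \<times> rat) list" where K2: "\<mu> \<in> weak_basic K2"
    "\<forall>\<nu>\<in>weak_basic K2. integral\<^sup>L \<mu> (\<lambda>x. B - f x) - r < integral\<^sup>L \<nu> (\<lambda>x. B - f x)"
    using weak_basic_integral_lower[OF f2 \<mu> r] by blast
  have "\<bar>integral\<^sup>L \<nu> f - integral\<^sup>L \<mu> f\<bar> < r" if \<nu>: "\<nu> \<in> weak_basic (K1 @ K2)" for \<nu>
  proof -
    have \<nu>12: "\<nu> \<in> weak_basic K1" "\<nu> \<in> weak_basic K2" using \<nu> by (simp_all add: weak_basic_append)
    then have "\<nu> \<in> borel_probs Omega_top" by (simp add: weak_basic_def)
    then show ?thesis
      using K1(2)[rule_format, OF \<nu>12(1)] K2(2)[rule_format, OF \<nu>12(2)]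
        integral_Cb_add_const[OF f \<mu>, of B] integral_Cb_add_const[OF f, of \<nu> B]
      by linarith
  qed
  then show ?thesis using K1(1) K2(1) weak_basic_append by blast
qed

lemma weak_basic_neighbourhood:
  fixes T :: "(real \<Rightarrow> real^'d::finite) measure set"
  assumes "openin (weak_topology Omega_top) T" and "\<mu> \<in> T"
  shows "\<exists>K :: ('d bump_code list \<times> rat \<times> rat) list. \<mu> \<in> weak_basic K \<and> weak_basic K \<subseteq> T"
proof -
  have "generate_topology_on {{\<nu> \<in> borel_probs Omega_top. integral\<^sup>L \<nu> f \<in> U} | f U.
      f \<in> Cb (Omega_top :: (real \<Rightarrow> real^'d) topology) \<and> open U} T"
    using assms(1) unfolding weak_topology_def openin_topology_generated_by_iff .
  then show ?thesis using assms(2)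
  proof (induction arbitrary: \<mu>)
    case Empty
    then show ?case by simp
  next
    case (Int S T)
    obtain K1 :: "('d bump_code list \<times> rat \<times> rat) list"
      where "\<mu> \<in> weak_basic K1" "weak_basic K1 \<subseteq> S" using Int by blast
    moreover obtain K2 :: "('d bump_code list \<times> rat \<times> rat) list"
      where "\<mu> \<in> weak_basic K2" "weak_basic K2 \<subseteq> T" using Int by blast
    ultimately show ?case by (intro exI[of _ "K1 @ K2"]) (auto simp: weak_basic_append)
  next
    case (UN \<K>)
    then obtain S where "S \<in> \<K>" "\<mu> \<in> S" by blast
    then obtain K :: "('d bump_code list \<times> rat \<times> rat) list"
      where "\<mu> \<in> weak_basic K" "weak_basic K \<subseteq> S" using UN by blast
    then show ?case using \<open>S \<in> \<K>\<close> by blast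
  next
    case (Basis S)
    then obtain f V where S: "S = {\<nu> \<in> borel_probs Omega_top. integral\<^sup>L \<nu> f \<in> V}"
      and f: "f \<in> Cb Omega_top" and V: "open V"
      by blast
    have \<mu>: "\<mu> \<in> borel_probs Omega_top" "integral\<^sup>L \<mu> f \<in> V" using Basis.prems S by auto
    obtain r where r: "r > 0" "ball (integral\<^sup>L \<mu> f) r \<subseteq> V"
      using open_contains_ball V \<mu>(2) by blast
    obtain K :: "('d bump_code list \<times> rat \<times> rat) list" where K: "\<mu> \<in> weak_basic K"
      "\<forall>\<nu>\<in>weak_basic K. \<bar>integral\<^sup>L \<nu> f - integral\<^sup>L \<mu> f\<bar> < r"
      using weak_basic_integral_near[OF f \<mu>(1) r(1)] by blast
    have "\<nu> \<in> S" if \<nu>: "\<nu> \<in> weak_basic K" for \<nu>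
    proof -
      have "dist (integral\<^sup>L \<nu> f) (integral\<^sup>L \<mu> f) < r" using K(2) \<nu> by (simp add: dist_real_def)
      then have "integral\<^sup>L \<nu> f \<in> V" using r(2) by (auto simp: dist_commute)
      moreover have "\<nu> \<in> borel_probs Omega_top" using \<nu> by (simp add: weak_basic_def)
      ultimately show ?thesis by (simp add: S)
    qed
    then show ?case using K(1) by blast
  qed
qed

lemma second_countable_weak_topology:
  "second_countable (weak_topology (Omega_top :: (real \<Rightarrow> real^'d::finite) topology))"
  unfolding second_countable_def
proof (intro exI conjI)
  let ?B = "range (weak_basic :: ('d bump_code list \<times> rat \<times> rat) list \<Rightarrow> _)"
  show "countable ?B" by simp
  show "\<forall>V\<in>?B. openin (weak_topology Omega_top) V" using openin_weak_basic by blast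
  show "\<forall>U \<mu>. openin (weak_topology Omega_top) U \<and> \<mu> \<in> U \<longrightarrow> (\<exists>V\<in>?B. \<mu> \<in> V \<and> V \<subseteq> U)"
  proof (intro allI impI)
    fix U :: "(real \<Rightarrow> real^'d) measure set" and \<mu>
    assume "openin (weak_topology Omega_top) U \<and> \<mu> \<in> U"
    then obtain K :: "('d bump_code list \<times> rat \<times> rat) list"
      where "\<mu> \<in> weak_basic K" "weak_basic K \<subseteq> U"
      using weak_basic_neighbourhood by blast
    then show "\<exists>V\<in>?B. \<mu> \<in> V \<and> V \<subseteq> U" by blast
  qed
qed

text \<open>Only the representing set \<open>\<P>\<close> enters the proof.\<close>

theorem proposition6p1:
  fixes H :: "((real \<Rightarrow> real^'d::finite) \<Rightarrow> real) set"
    and E :: "((real \<Rightarrow> real^'d) \<Rightarrow> real) \<Rightarrow> real"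
    and \<P> :: "(real \<Rightarrow> real^'d) measure set"
  assumes "H \<subseteq> Cb Omega_top"
    and "vector_lattice_with_one Omega H"
    and "sublinear_expectation Omega H E"
    and "\<P> \<noteq> {}" and "weakly_rel_compact Omega_top \<P>"
    and "\<forall>f\<in>H. E f = (SUP P\<in>\<P>. integral\<^sup>L P f)"
  shows "\<exists>Q :: nat \<Rightarrow> (real \<Rightarrow> real^'d) measure.
     range Q \<subseteq> \<P> \<and> weakly_rel_compact Omega_top (range Q) \<and>
     (\<forall>X\<in>Cb Omega_top. (SUP P\<in>\<P>. integral\<^sup>L P X) = (SUP n. integral\<^sup>L (Q n) X)) \<and>
     (\<forall>f\<in>Cb Omega_top. (\<forall>w\<in>Omega. 0 \<le> f w) \<longrightarrow>
        ((SUP P\<in>\<P>. integral\<^sup>L P f) = 0 \<longleftrightarrow> (AE w in mixture Omega_top Q. f w = 0))) \<and>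
     (\<forall>X\<in>Cb Omega_top. \<exists>QX \<in> weak_topology Omega_top closure_of range Q.
        (SUP P\<in>\<P>. integral\<^sup>L P X) = integral\<^sup>L QX X)"
proof -
  let ?W = "weak_topology (Omega_top :: (real \<Rightarrow> real^'d) topology)"
  have \<P>: "\<P> \<subseteq> borel_probs Omega_top" and compact: "compactin ?W (?W closure_of \<P>)"
    using assms(5) unfolding weakly_rel_compact_def by auto
  then have "\<P> \<subseteq> topspace ?W" by (simp add: topspace_weak_topology)
  then obtain Q :: "nat \<Rightarrow> (real \<Rightarrow> real^'d) measure"
    where Q_\<P>: "range Q \<subseteq> \<P>" and dense: "\<P> \<subseteq> ?W closure_of range Q"
    using second_countable_dense_sequence[OF second_countable_weak_topology _ assms(4)] by auto
  have Q: "range Q \<subseteq> borel_probs Omega_top" using Q_\<P> \<P> by blast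
  have compact_Q: "compactin ?W (?W closure_of range Q)"
    by (rule closed_compactin[OF compact closure_of_mono[OF Q_\<P>]]) simp
  have SUP_eq: "(SUP P\<in>\<P>. integral\<^sup>L P X) = (SUP n. integral\<^sup>L (Q n) X)" if "X \<in> Cb Omega_top" for X
    using SUP_integral_eq_of_dense[OF that \<P> assms(4) Q_\<P> dense] .
  show ?thesis
  proof (intro exI[of _ Q] conjI ballI impI)
    show "weakly_rel_compact Omega_top (range Q)"
      unfolding weakly_rel_compact_def using Q compact_Q by blast
    show "(SUP P\<in>\<P>. integral\<^sup>L P f) = 0 \<longleftrightarrow> (AE w in mixture Omega_top Q. f w = 0)"
      if "f \<in> Cb Omega_top" and "\<forall>w\<in>Omega. 0 \<le> f w" for f
      using SUP_integral_eq_0_iff_AE_mixture[OF that(1) _ Q] that SUP_eq by (simp add: topspace_Omega_top)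
    show "\<exists>QX\<in>?W closure_of range Q. (SUP P\<in>\<P>. integral\<^sup>L P X) = integral\<^sup>L QX X"
      if "X \<in> Cb Omega_top" for X
      using SUP_integral_attained_in_closure[OF that Q compact_Q] SUP_eq[OF that] by simp
  qed (use Q_\<P> SUP_eq in auto)
qed

end
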